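(* For each integer $g\geq 2$ there exists a large set of H-designs LH$(10,g,4,3)$.
   Context: An H-design H$(n,g,k,t)$ is a triple $(Q,G,B)$ where $Q$ is a set of $ng$ points, $G$ is a partition of $Q$ into $n$ groups of size $g$, and $B$ is a set of $k$-subsets of $Q$ (blocks) such that each block meets each group in at most one point and any $t$ points from $t$ distinct groups lie in exactly one block. A large set of H-designs LH$(n,g,k,t)$ is a partition of the set of all $k$-subsets of $Q$ meeting each group of $G$ in at most one point into pairwise disjoint block sets, each of which forms (with $Q$ and $G$) an H-design H$(n,g,k,t)$. *)

theory Defs
  imports "HOL-Library.Disjoint_Sets"
begin

definition transverse :: "'a set set \<Rightarrow> 'a set \<Rightarrow> bool" where
  "transverse G S \<longleftrightarrow> (\<forall>X\<in>G. card (S \<inter> X) \<le> 1)"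

definition group_partition :: "nat \<Rightarrow> nat \<Rightarrow> 'a set \<Rightarrow> 'a set set \<Rightarrow> bool" where
  "group_partition n g Q G \<longleftrightarrow>
     finite Q \<and> partition_on Q G \<and> card G = n \<and> (\<forall>X\<in>G. card X = g)"

definition transverse_ksets :: "nat \<Rightarrow> 'a set \<Rightarrow> 'a set set \<Rightarrow> 'a set set" where
  "transverse_ksets k Q G = {S. S \<subseteq> Q \<and> card S = k \<and> transverse G S}"

definition H_design :: "nat \<Rightarrow> nat \<Rightarrow> nat \<Rightarrow> nat \<Rightarrow> 'a set \<Rightarrow> 'a set set \<Rightarrow> 'a set set \<Rightarrow> bool" where
  "H_design n g k t Q G B \<longleftrightarrow>
     group_partition n g Q G \<and>
     B \<subseteq> transverse_ksets k Q G \<and>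
     (\<forall>T \<in> transverse_ksets t Q G. card {b\<in>B. T \<subseteq> b} = 1)"

definition large_set_H :: "nat \<Rightarrow> nat \<Rightarrow> nat \<Rightarrow> nat \<Rightarrow> 'a set \<Rightarrow> 'a set set \<Rightarrow> 'a set set set \<Rightarrow> bool" where
  "large_set_H n g k t Q G \<B> \<longleftrightarrow>
     group_partition n g Q G \<and>
     partition_on (transverse_ksets k Q G) \<B> \<and>
     (\<forall>B\<in>\<B>. H_design n g k t Q G B)"

end

theory Submission
  imports Defs
begin

(* Write the point a * g + y of group a as the pair (a, y) with y in Z_g. Suppose the
   (t+1)-subsets of an n-set are covered exactly g times by Steiner systems S(t, t+1, n)
   F 0, ..., F (N - 1), and for each (t+1)-set Q label the g systems containing Q by 0, ..., g - 1.
   Let block set i consist of the transverse (t+1)-sets whose group projection Q lies in F i and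
   whose coordinates sum to the label of i at Q modulo g. Every transverse (t+1)-set lies in
   exactly one block set, and each block set is an H-design: a transverse t-set extends by the
   unique group that completes its projection to a block of F i, and within that group by the
   unique coordinate that gives the right sum. For n = 10 and t = 3, decompositions into copies
   of the unique SQS(10) exist for g = 2 and g = 3 (14 and 21 relabellings, checked by
   evaluation), and concatenating them gives every g >= 2. *)

section \<open>Steiner systems and their decompositions\<close>

definition steiner_system :: "nat \<Rightarrow> nat \<Rightarrow> 'a set \<Rightarrow> 'a set set \<Rightarrow> bool" where
  "steiner_system t k V S \<longleftrightarrow>
     S \<subseteq> {Q. Q \<subseteq> V \<and> card Q = k} \<and>
     (\<forall>T. T \<subseteq> V \<and> card T = t \<longrightarrow> card {Q \<in> S. T \<subseteq> Q} = 1)"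

definition steiner_decomposition ::
    "nat \<Rightarrow> nat \<Rightarrow> nat \<Rightarrow> 'a set \<Rightarrow> nat \<Rightarrow> (nat \<Rightarrow> 'a set set) \<Rightarrow> bool" where
  "steiner_decomposition lam t k V N F \<longleftrightarrow>
     (\<forall>i<N. steiner_system t k V (F i)) \<and>
     (\<forall>Q. Q \<subseteq> V \<and> card Q = k \<longrightarrow> card {i. i < N \<and> Q \<in> F i} = lam)"

lemma steiner_system_unique_extension:
  assumes S: "steiner_system t (Suc t) V S" and A: "A \<subseteq> V" "card A = t"
  shows "\<exists>!a. a \<in> V \<and> a \<notin> A \<and> insert a A \<in> S"
proof -
  have blocks: "Q \<subseteq> V \<and> card Q = Suc t" if "Q \<in> S" for Q
    using S that unfolding steiner_system_def by blast
  have "card {Q \<in> S. A \<subseteq> Q} = 1"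
    using S A unfolding steiner_system_def by blast
  then obtain Q where Q: "{Q \<in> S. A \<subseteq> Q} = {Q}"
    by (auto simp: card_1_singleton_iff)
  then have "Q \<in> S" "A \<subseteq> Q"
    by auto
  then have "finite Q" "card Q = Suc t"
    using blocks[of Q] card.infinite by fastforce+
  then have "card (Q - A) = 1"
    using \<open>A \<subseteq> Q\<close> A(2) by (simp add: card_Diff_subset finite_subset)
  then obtain a where a: "Q - A = {a}"
    by (auto simp: card_1_singleton_iff)
  have unique: "a' = a" if "a' \<notin> A" "insert a' A \<in> S" for a'
  proof -
    have "insert a' A \<in> {Q \<in> S. A \<subseteq> Q}"
      using that(2) by (simp add: subset_insertI)
    then have "insert a' A = Q"
      using Q by simp
    then have "a' \<in> Q - A"
      using that(1) by blast
    then show ?thesis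
      using a by simp
  qed
  have "Q = insert a A" "a \<notin> A"
    using a \<open>A \<subseteq> Q\<close> by auto
  moreover have "a \<in> V"
    using a blocks[OF \<open>Q \<in> S\<close>] by auto
  ultimately have "a \<in> V \<and> a \<notin> A \<and> insert a A \<in> S"
    using \<open>Q \<in> S\<close> by simp
  then show ?thesis
    using unique by blast
qed

lemma steiner_system_image:
  assumes f: "bij_betw f V W" and S: "steiner_system t k V S"
  shows "steiner_system t k W (image f ` S)"
proof -
  have inj: "inj_on f V" and W: "f ` V = W"
    using f by (auto simp: bij_betw_def)
  have blocks: "Q \<subseteq> V \<and> card Q = k" if "Q \<in> S" for Q
    using S that unfolding steiner_system_def by blast
  have "card {Q' \<in> image f ` S. T \<subseteq> Q'} = 1" if T: "T \<subseteq> W" "card T = t" for T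
  proof -
    define T' where "T' = inv_into V f ` T"
    have T': "T' \<subseteq> V" "f ` T' = T"
      using T W by (auto simp: T'_def inv_into_into image_inv_into_cancel)
    then have "card T' = t"
      using T(2) inj by (metis card_image inj_on_subset)
    then have "card {Q \<in> S. T' \<subseteq> Q} = 1"
      using S T'(1) unfolding steiner_system_def by blast
    moreover have "{Q' \<in> image f ` S. T \<subseteq> Q'} = image f ` {Q \<in> S. T' \<subseteq> Q}"
    proof (intro equalityI subsetI)
      fix Q' assume "Q' \<in> {Q' \<in> image f ` S. T \<subseteq> Q'}"
      then obtain Q where "Q \<in> S" "Q' = f ` Q" "f ` T' \<subseteq> f ` Q"
        using T'(2) by auto
      moreover have "T' \<subseteq> Q"
      proof
        fix x assume "x \<in> T'"
        then obtain y where "y \<in> Q" "f x = f y"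
          using \<open>f ` T' \<subseteq> f ` Q\<close> by blast
        then show "x \<in> Q"
          using inj_onD[OF inj] \<open>x \<in> T'\<close> T'(1) blocks[OF \<open>Q \<in> S\<close>] by blast
      qed
      ultimately show "Q' \<in> image f ` {Q \<in> S. T' \<subseteq> Q}"
        by blast
    qed (use T'(2) in auto)
    moreover have "inj_on (image f) {Q \<in> S. T' \<subseteq> Q}"
      using inj_on_image_Pow[OF inj] by (rule inj_on_subset) (use blocks in auto)
    ultimately show ?thesis
      by (simp add: card_image)
  qed
  moreover have "f ` Q \<subseteq> W \<and> card (f ` Q) = k" if "Q \<in> S" for Q
    using blocks[OF that] W inj by (auto simp: card_image inj_on_subset)
  ultimately show ?thesis
    unfolding steiner_system_def by blast
qed

lemma steiner_system_pullback:
  assumes h: "bij_betw h V W" and S: "steiner_system t k W S"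
  shows "steiner_system t k V {Q. Q \<subseteq> V \<and> h ` Q \<in> S}"
proof -
  have inj: "inj_on h V" and W: "h ` V = W"
    using h by (auto simp: bij_betw_def)
  have "{Q. Q \<subseteq> V \<and> h ` Q \<in> S} = image (inv_into V h) ` S"
  proof (intro equalityI subsetI)
    fix Q assume "Q \<in> {Q. Q \<subseteq> V \<and> h ` Q \<in> S}"
    then show "Q \<in> image (inv_into V h) ` S"
      using inj by (auto intro!: image_eqI[of _ _ "h ` Q"])
  next
    fix Q assume "Q \<in> image (inv_into V h) ` S"
    then obtain Q' where Q': "Q' \<in> S" "Q = inv_into V h ` Q'"
      by blast
    then have "Q' \<subseteq> W"
      using S unfolding steiner_system_def by blast
    then have "Q \<subseteq> V" "h ` Q = Q'"
      using Q'(2) W inv_into_into[of _ h V] image_inv_into_cancel[OF W] by auto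
    then show "Q \<in> {Q. Q \<subseteq> V \<and> h ` Q \<in> S}"
      using Q'(1) by simp
  qed
  then show ?thesis
    using steiner_system_image[OF bij_betw_inv_into[OF h] S] by simp
qed

lemma steiner_decomposition_append:
  assumes D1: "steiner_decomposition l1 t k V N1 F1"
    and D2: "steiner_decomposition l2 t k V N2 F2"
  shows "steiner_decomposition (l1 + l2) t k V (N1 + N2) (\<lambda>i. if i < N1 then F1 i else F2 (i - N1))"
    (is "steiner_decomposition _ _ _ _ _ ?F")
proof -
  have "card {i. i < N1 + N2 \<and> Q \<in> ?F i} = l1 + l2" if "Q \<subseteq> V" "card Q = k" for Q
  proof -
    let ?I1 = "{i. i < N1 \<and> Q \<in> F1 i}" and ?I2 = "{j. j < N2 \<and> Q \<in> F2 j}"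
    have "{i. i < N1 + N2 \<and> Q \<in> ?F i} = ?I1 \<union> (\<lambda>j. N1 + j) ` ?I2"
    proof (intro equalityI subsetI)
      fix i assume "i \<in> {i. i < N1 + N2 \<and> Q \<in> ?F i}"
      then show "i \<in> ?I1 \<union> (\<lambda>j. N1 + j) ` ?I2"
        by (cases "i < N1") (auto intro!: image_eqI[of _ _ "i - N1"])
    qed auto
    moreover have "card (?I1 \<union> (\<lambda>j. N1 + j) ` ?I2) = card ?I1 + card ((\<lambda>j. N1 + j) ` ?I2)"
      by (rule card_Un_disjoint) auto
    moreover have "card ?I1 = l1" "card ?I2 = l2"
      using D1 D2 that unfolding steiner_decomposition_def by blast+
    ultimately show ?thesis
      by (simp add: card_image)
  qed
  moreover have "steiner_system t k V (?F i)" if "i < N1 + N2" for i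
    using D1 D2 that unfolding steiner_decomposition_def by auto
  ultimately show ?thesis
    unfolding steiner_decomposition_def by blast
qed

lemma steiner_decomposition_from_2_and_3:
  assumes D2: "steiner_decomposition 2 t k V N2 F2"
    and D3: "steiner_decomposition 3 t k V N3 F3"
    and "2 \<le> lam"
  shows "\<exists>N F. steiner_decomposition lam t k V N F"
  using \<open>2 \<le> lam\<close>
proof (induction lam rule: less_induct)
  case (less lam)
  consider "lam = 2" | "lam = 3" | "4 \<le> lam"
    using less.prems by linarith
  then show ?case
  proof cases
    case 3
    then have "lam - 2 < lam" "2 \<le> lam - 2"
      by auto
    then obtain N F where "steiner_decomposition (lam - 2) t k V N F"
      using less.IH by blast
    from steiner_decomposition_append[OF this D2] show ?thesis
      using \<open>4 \<le> lam\<close> by (metis le_add_diff_inverse2 add_leD2 numeral_Bit0)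
  qed (use D2 D3 in blast)+
qed

lemma steiner_decomposition_pullbacks:
  fixes qs :: "nat list list"
  assumes S: "steiner_system t k {..<n} S"
    and perms: "\<And>q. q \<in> set qs \<Longrightarrow> length q = n \<and> set q = {..<n}"
    and count: "\<And>Q. Q \<subseteq> {..<n} \<Longrightarrow> card Q = k \<Longrightarrow> length (filter (\<lambda>q. (!) q ` Q \<in> S) qs) = lam"
  shows "steiner_decomposition lam t k {..<n} (length qs)
      (\<lambda>i. {Q. Q \<subseteq> {..<n} \<and> (!) (qs ! i) ` Q \<in> S})"
proof -
  have "bij_betw ((!) q) {..<n} {..<n}" if "q \<in> set qs" for q
    using perms[OF that] by (intro bij_betw_nth) (auto simp: card_distinct)
  then have "steiner_system t k {..<n} {Q. Q \<subseteq> {..<n} \<and> (!) (qs ! i) ` Q \<in> S}"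
    if "i < length qs" for i
    using steiner_system_pullback S nth_mem that by blast
  moreover have "card {i. i < length qs \<and> Q \<in> {Q. Q \<subseteq> {..<n} \<and> (!) (qs ! i) ` Q \<in> S}} = lam"
    if "Q \<subseteq> {..<n}" "card Q = k" for Q
    using count[OF that] that(1) by (simp add: length_filter_conv_card)
  ultimately show ?thesis
    unfolding steiner_decomposition_def by blast
qed

section \<open>Lifting a decomposition into Steiner systems to a large set of H-designs\<close>

lemma ex1_add_mod_eq:
  fixes c g r :: nat
  assumes "r < g"
  shows "\<exists>!y. y < g \<and> (c + y) mod g = r"
proof -
  have eq_if_le: "y = y'" if "y \<le> y'" "y' < g" "(c + y) mod g = (c + y') mod g" for y y'
  proof -
    have "g dvd y' - y" "y' - y < g"
      using that mod_eq_dvd_iff_nat[of "c + y" "c + y'" g] by simp_all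
    then have "y' - y = 0"
      by (metis nat_dvd_not_less neq0_conv)
    then show ?thesis
      using \<open>y \<le> y'\<close> by simp
  qed
  have inj: "inj_on (\<lambda>y. (c + y) mod g) {..<g}"
    by (rule inj_onI) (metis eq_if_le lessThan_iff nat_le_linear)
  have "(\<lambda>y. (c + y) mod g) ` {..<g} \<subseteq> {..<g}"
    using assms by auto
  then have "(\<lambda>y. (c + y) mod g) ` {..<g} = {..<g}"
    using endo_inj_surj[OF finite_lessThan _ inj] by blast
  then have "r \<in> (\<lambda>y. (c + y) mod g) ` {..<g}"
    using assms by simp
  then obtain y where y: "y < g" "(c + y) mod g = r"
    by auto
  show ?thesis
  proof (rule ex1I[of _ y])
    show "y < g \<and> (c + y) mod g = r"
      using y by simp
  next
    fix y' assume "y' < g \<and> (c + y') mod g = r"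
    then show "y' = y"
      using inj_onD[OF inj, of y' y] y by simp
  qed
qed

lemma inj_on_iff_card_fibers_le_1:
  assumes "finite S"
  shows "inj_on f S \<longleftrightarrow> (\<forall>a. card {x \<in> S. f x = a} \<le> 1)"
proof
  assume inj: "inj_on f S"
  show "\<forall>a. card {x \<in> S. f x = a} \<le> 1"
  proof
    fix a
    have "finite {x \<in> S. f x = a}"
      using assms by simp
    moreover have "\<forall>x\<in>{x \<in> S. f x = a}. \<forall>y\<in>{x \<in> S. f x = a}. x = y"
      using inj unfolding inj_on_def by blast
    ultimately have "card {x \<in> S. f x = a} \<le> Suc 0"
      using card_le_Suc0_iff_eq by blast
    then show "card {x \<in> S. f x = a} \<le> 1"
      by simp
  qed
next
  assume card: "\<forall>a. card {x \<in> S. f x = a} \<le> 1"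
  show "inj_on f S"
  proof (rule inj_onI)
    fix x y assume xy: "x \<in> S" "y \<in> S" "f x = f y"
    have "finite {x' \<in> S. f x' = f x}" "card {x' \<in> S. f x' = f x} \<le> Suc 0"
      using assms card by simp_all
    moreover have "x \<in> {x' \<in> S. f x' = f x}" "y \<in> {x' \<in> S. f x' = f x}"
      using xy by simp_all
    ultimately show "x = y"
      using card_le_Suc0_iff_eq by blast
  qed
qed

definition div_groups :: "nat \<Rightarrow> nat \<Rightarrow> nat set set" where
  "div_groups n g = (\<lambda>a. {a * g..<a * g + g}) ` {..<n}"

lemma atLeastLessThan_eq_div_fiber:
  fixes g :: nat
  assumes "0 < g"
  shows "{a * g..<a * g + g} = {p. p div g = a}"
proof (intro equalityI subsetI)
  fix p assume "p \<in> {a * g..<a * g + g}"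
  then show "p \<in> {p. p div g = a}"
    by (auto intro: div_nat_eqI simp: mult.commute)
next
  fix p assume "p \<in> {p. p div g = a}"
  moreover have "p = p div g * g + p mod g" "p mod g < g"
    using assms by simp_all
  ultimately show "p \<in> {a * g..<a * g + g}"
    by (metis add_less_cancel_left atLeastLessThan_iff le_add1 mem_Collect_eq)
qed

lemma group_partition_div_groups:
  fixes g :: nat
  assumes g: "0 < g"
  shows "group_partition n g {..<n * g} (div_groups n g)"
  unfolding group_partition_def
proof (intro conjI)
  have "inj_on (\<lambda>a. {a * g..<a * g + g}) {..<n}"
    using g by (intro inj_onI) (simp add: atLeastLessThan_eq_div_fiber set_eq_iff, metis div_mult_self1_is_m)
  then show "card (div_groups n g) = n"
    by (simp add: div_groups_def card_image)
  show "\<forall>X\<in>div_groups n g. card X = g"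
    by (auto simp: div_groups_def)
  show "partition_on {..<n * g} (div_groups n g)"
  proof (rule partition_onI)
    show "\<Union> (div_groups n g) = {..<n * g}"
      using g by (auto simp: div_groups_def atLeastLessThan_eq_div_fiber div_less_iff_less_mult)
    show "disjnt X Y" if "X \<in> div_groups n g" "Y \<in> div_groups n g" "X \<noteq> Y" for X Y
      using that g by (auto simp: div_groups_def disjnt_def atLeastLessThan_eq_div_fiber)
    show "{} \<notin> div_groups n g"
      using g by (auto simp: div_groups_def)
  qed
qed simp

lemma transverse_div_groups_iff:
  fixes g :: nat
  assumes g: "0 < g" and S: "S \<subseteq> {..<n * g}"
  shows "transverse (div_groups n g) S \<longleftrightarrow> inj_on (\<lambda>p. p div g) S"
proof -
  have "S \<inter> {a * g..<a * g + g} = {p \<in> S. p div g = a}" for a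
    using g by (auto simp: atLeastLessThan_eq_div_fiber)
  then have "transverse (div_groups n g) S \<longleftrightarrow> (\<forall>a\<in>{..<n}. card {p \<in> S. p div g = a} \<le> 1)"
    by (simp add: transverse_def div_groups_def)
  also have "\<dots> \<longleftrightarrow> (\<forall>a. card {p \<in> S. p div g = a} \<le> 1)"
  proof -
    have "{p \<in> S. p div g = a} = {}" if "a \<notin> {..<n}" for a
      using S g that by (auto simp: div_less_iff_less_mult[symmetric])
    then show ?thesis
      by (metis card.empty zero_le)
  qed
  also have "\<dots> \<longleftrightarrow> inj_on (\<lambda>p. p div g) S"
    using S finite_subset by (intro inj_on_iff_card_fibers_le_1[symmetric]) blast
  finally show ?thesis .
qed

lemma mem_transverse_ksets_div_groups:
  fixes g :: nat
  assumes "0 < g"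
  shows "T \<in> transverse_ksets k {..<n * g} (div_groups n g) \<longleftrightarrow>
         T \<subseteq> {..<n * g} \<and> card T = k \<and> inj_on (\<lambda>p. p div g) T"
  using transverse_div_groups_iff[OF assms] unfolding transverse_ksets_def by blast

lemma div_image_transverse_kset:
  fixes g :: nat
  assumes "0 < g" "T \<in> transverse_ksets k {..<n * g} (div_groups n g)"
  shows "(\<lambda>p. p div g) ` T \<subseteq> {..<n} \<and> card ((\<lambda>p. p div g) ` T) = k"
  using assms by (auto simp: mem_transverse_ksets_div_groups div_less_iff_less_mult card_image)

lemma insert_mem_transverse_ksets_div_groups:
  fixes g :: nat
  assumes g: "0 < g" and T: "T \<in> transverse_ksets t {..<n * g} (div_groups n g)"
    and p: "p < n * g" "p div g \<notin> (\<lambda>p. p div g) ` T"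
  shows "insert p T \<in> transverse_ksets (Suc t) {..<n * g} (div_groups n g)"
proof -
  have "T \<subseteq> {..<n * g}" "card T = t" "inj_on (\<lambda>p. p div g) T"
    using T g by (simp_all add: mem_transverse_ksets_div_groups)
  moreover have "finite T" "p \<notin> T"
    using calculation(1) p(2) finite_subset by auto
  ultimately show ?thesis
    using g p by (simp add: mem_transverse_ksets_div_groups)
qed

lemma transverse_ksets_div_groups_extension:
  fixes g :: nat
  assumes g: "0 < g" and T: "T \<in> transverse_ksets t {..<n * g} (div_groups n g)"
    and b: "b \<in> transverse_ksets (Suc t) {..<n * g} (div_groups n g)" and "T \<subseteq> b"
  obtains p where "b = insert p T" "p < n * g" "p div g \<notin> (\<lambda>p. p div g) ` T"
proof -
  have b': "b \<subseteq> {..<n * g}" "card b = Suc t" "inj_on (\<lambda>p. p div g) b"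
    using b g by (simp_all add: mem_transverse_ksets_div_groups)
  have "finite T" "card T = t"
    using T g finite_subset by (auto simp: mem_transverse_ksets_div_groups)
  then have "card (b - T) = 1"
    using b'(2) \<open>T \<subseteq> b\<close> by (simp add: card_Diff_subset)
  then obtain p where p: "b - T = {p}"
    by (auto simp: card_1_singleton_iff)
  then have "b = insert p T" "p \<in> b" "p \<notin> T"
    using \<open>T \<subseteq> b\<close> by auto
  moreover have "p div g \<notin> (\<lambda>p. p div g) ` T"
    using b'(3) \<open>T \<subseteq> b\<close> calculation(2,3) by (auto dest: inj_onD)
  ultimately show ?thesis
    using that b'(1) by blast
qed

lemma partition_on_by_unique_index:
  assumes sub: "\<And>i. i \<in> I \<Longrightarrow> B i \<subseteq> A" and unique: "\<And>x. x \<in> A \<Longrightarrow> \<exists>!i. i \<in> I \<and> x \<in> B i"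
  shows "partition_on A (B ` I - {{}})"
proof (rule partition_onI)
  show "\<Union> (B ` I - {{}}) = A"
  proof (intro equalityI subsetI)
    fix x assume "x \<in> \<Union> (B ` I - {{}})"
    then show "x \<in> A"
      using sub by auto
  next
    fix x assume "x \<in> A"
    then obtain i where "i \<in> I" "x \<in> B i"
      using unique by blast
    then show "x \<in> \<Union> (B ` I - {{}})"
      by auto
  qed
next
  fix X Y assume "X \<in> B ` I - {{}}" "Y \<in> B ` I - {{}}" "X \<noteq> Y"
  then obtain i j where ij: "i \<in> I" "j \<in> I" "X = B i" "Y = B j" "i \<noteq> j"
    by auto
  have "x \<notin> Y" if "x \<in> X" for x
  proof
    assume "x \<in> Y"
    have "x \<in> A"
      using sub ij that by auto
    then show False
      using unique[of x] ij that \<open>x \<in> Y\<close> by auto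
  qed
  then show "disjnt X Y"
    by (auto simp: disjnt_def)
qed simp

locale steiner_decomposition_lifting =
  fixes n g t N :: nat and F :: "nat \<Rightarrow> nat set set" and label :: "nat set \<Rightarrow> nat \<Rightarrow> nat"
  assumes g_pos: "0 < g"
    and decomposition: "steiner_decomposition g t (Suc t) {..<n} N F"
    and label: "\<And>Q. Q \<subseteq> {..<n} \<Longrightarrow> card Q = Suc t \<Longrightarrow>
        bij_betw (label Q) {i. i < N \<and> Q \<in> F i} {..<g}"
begin

abbreviation transverse_sets :: "nat \<Rightarrow> nat set set" where
  "transverse_sets k \<equiv> transverse_ksets k {..<n * g} (div_groups n g)"

definition blocks :: "nat \<Rightarrow> nat set set" where
  "blocks i = {T \<in> transverse_sets (Suc t).
      (\<lambda>p. p div g) ` T \<in> F i \<and> (\<Sum>p\<in>T. p mod g) mod g = label ((\<lambda>p. p div g) ` T) i}"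

lemma unique_block_index:
  assumes T: "T \<in> transverse_sets (Suc t)"
  shows "\<exists>!i. i < N \<and> T \<in> blocks i"
proof -
  define Q where "Q = (\<lambda>p. p div g) ` T"
  define r where "r = (\<Sum>p\<in>T. p mod g) mod g"
  have "Q \<subseteq> {..<n}" "card Q = Suc t"
    using div_image_transverse_kset[OF g_pos T] unfolding Q_def by auto
  then have bij: "bij_betw (label Q) {i. i < N \<and> Q \<in> F i} {..<g}"
    by (rule label)
  have mem_blocks: "T \<in> blocks i \<longleftrightarrow> Q \<in> F i \<and> r = label Q i" for i
    using T unfolding blocks_def Q_def r_def by simp
  have "r \<in> label Q ` {i. i < N \<and> Q \<in> F i}"
    using bij g_pos by (simp add: bij_betw_imp_surj_on r_def)
  then obtain i where i: "i < N" "Q \<in> F i" "r = label Q i"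
    by auto
  show ?thesis
  proof (rule ex1I[of _ i])
    show "i < N \<and> T \<in> blocks i"
      using i mem_blocks[of i] by blast
  next
    fix j assume j: "j < N \<and> T \<in> blocks j"
    then have "Q \<in> F j" "label Q j = label Q i"
      using mem_blocks[of j] i(3) by auto
    then show "j = i"
      using inj_onD[OF bij_betw_imp_inj_on[OF bij]] i(1,2) j by blast
  qed
qed

lemma partition_on_blocks: "partition_on (transverse_sets (Suc t)) (blocks ` {..<N} - {{}})"
proof (rule partition_on_by_unique_index)
  show "blocks i \<subseteq> transverse_sets (Suc t)" for i
    by (simp add: blocks_def)
  show "\<exists>!i. i \<in> {..<N} \<and> T \<in> blocks i" if "T \<in> transverse_sets (Suc t)" for T
    using unique_block_index[OF that] by simp
qed

lemma insert_mem_blocks_iff: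
  assumes T: "T \<in> transverse_sets t" and p: "p < n * g" "p div g \<notin> (\<lambda>p. p div g) ` T"
  shows "insert p T \<in> blocks i \<longleftrightarrow>
      insert (p div g) ((\<lambda>p. p div g) ` T) \<in> F i \<and>
      ((\<Sum>q\<in>T. q mod g) + p mod g) mod g = label (insert (p div g) ((\<lambda>p. p div g) ` T)) i"
proof -
  have "finite T" "p \<notin> T"
    using T p(2) g_pos finite_subset by (auto simp: mem_transverse_ksets_div_groups)
  then show ?thesis
    using insert_mem_transverse_ksets_div_groups[OF g_pos T p]
    by (simp add: blocks_def add.commute)
qed

lemma unique_point_extension:
  assumes i: "i < N" and T: "T \<in> transverse_sets t"
  shows "\<exists>!p. p < n * g \<and> p div g \<notin> (\<lambda>p. p div g) ` T \<and> insert p T \<in> blocks i"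
proof -
  define A where "A = (\<lambda>p. p div g) ` T"
  define \<tau> where "\<tau> = (\<Sum>q\<in>T. q mod g)"
  have "A \<subseteq> {..<n}" "card A = t"
    using div_image_transverse_kset[OF g_pos T] unfolding A_def by auto
  moreover have "steiner_system t (Suc t) {..<n} (F i)"
    using decomposition i unfolding steiner_decomposition_def by blast
  ultimately obtain d where d: "d < n" "d \<notin> A" "insert d A \<in> F i"
    and d_unique: "\<And>d'. d' < n \<Longrightarrow> d' \<notin> A \<Longrightarrow> insert d' A \<in> F i \<Longrightarrow> d' = d"
    using steiner_system_unique_extension by (metis lessThan_iff)
  have "finite A"
    using \<open>A \<subseteq> {..<n}\<close> finite_subset by blast
  then have "insert d A \<subseteq> {..<n}" "card (insert d A) = Suc t"
    using d \<open>A \<subseteq> {..<n}\<close> \<open>card A = t\<close> by auto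
  then have "bij_betw (label (insert d A)) {i. i < N \<and> insert d A \<in> F i} {..<g}"
    by (rule label)
  then have "label (insert d A) i < g"
    using i d(3) bij_betw_apply by fastforce
  from ex1_add_mod_eq[OF this, of \<tau>] obtain y where y: "y < g" "(\<tau> + y) mod g = label (insert d A) i"
    and y_unique: "\<And>y'. y' < g \<Longrightarrow> (\<tau> + y') mod g = label (insert d A) i \<Longrightarrow> y' = y"
    by blast
  have p_unique: "p = d * g + y" if p: "p < n * g" "p div g \<notin> A" "insert p T \<in> blocks i" for p
  proof -
    have "insert (p div g) A \<in> F i" "(\<tau> + p mod g) mod g = label (insert (p div g) A) i"
      using p insert_mem_blocks_iff[OF T p(1), folded A_def \<tau>_def] by auto
    moreover have "p div g < n"
      using p(1) g_pos by (simp add: div_less_iff_less_mult)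
    ultimately have "p div g = d"
      using d_unique p(2) by blast
    moreover have "p mod g = y"
      using y_unique[of "p mod g"] g_pos \<open>(\<tau> + p mod g) mod g = _\<close> \<open>p div g = d\<close> by simp
    ultimately show ?thesis
      by (metis div_mult_mod_eq)
  qed
  have p0_div: "(d * g + y) div g = d" "(d * g + y) mod g = y"
    using y(1) g_pos by simp_all
  then have p0: "d * g + y < n * g" "(d * g + y) div g \<notin> A"
    using d(1,2) g_pos by (simp_all add: div_less_iff_less_mult[symmetric])
  then have "insert (d * g + y) T \<in> blocks i"
    using insert_mem_blocks_iff[OF T p0(1), folded A_def \<tau>_def] p0_div d(3) y(2) by simp
  then show ?thesis
    using p0 p_unique unfolding A_def by (intro ex1I[of _ "d * g + y"]) blast+
qed

lemma H_design_blocks: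
  assumes "i < N"
  shows "H_design n g (Suc t) t {..<n * g} (div_groups n g) (blocks i)"
  unfolding H_design_def
proof (intro conjI ballI)
  show "group_partition n g {..<n * g} (div_groups n g)"
    using g_pos by (rule group_partition_div_groups)
  show "blocks i \<subseteq> transverse_sets (Suc t)"
    by (auto simp: blocks_def)
  fix T assume T: "T \<in> transverse_sets t"
  obtain p where p: "insert p T \<in> blocks i"
    and p_unique: "\<And>p'. p' < n * g \<Longrightarrow> p' div g \<notin> (\<lambda>p. p div g) ` T \<Longrightarrow>
        insert p' T \<in> blocks i \<Longrightarrow> p' = p"
    using unique_point_extension[OF assms T] by blast
  have "b = insert p T" if b: "b \<in> blocks i" "T \<subseteq> b" for b
  proof -
    have "b \<in> transverse_sets (Suc t)"
      using b(1) by (simp add: blocks_def)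
    then obtain p' where "b = insert p' T" "p' < n * g" "p' div g \<notin> (\<lambda>p. p div g) ` T"
      using transverse_ksets_div_groups_extension[OF g_pos T _ b(2)] by blast
    then show ?thesis
      using p_unique b(1) by blast
  qed
  then have "{b \<in> blocks i. T \<subseteq> b} = {insert p T}"
    using p by blast
  then show "card {b \<in> blocks i. T \<subseteq> b} = 1"
    by simp
qed

lemma large_set_H_blocks:
  "large_set_H n g (Suc t) t {..<n * g} (div_groups n g) (blocks ` {..<N} - {{}})"
  unfolding large_set_H_def
proof (intro conjI ballI)
  show "group_partition n g {..<n * g} (div_groups n g)"
    using g_pos by (rule group_partition_div_groups)
  show "partition_on (transverse_sets (Suc t)) (blocks ` {..<N} - {{}})"
    by (rule partition_on_blocks)
  fix B assume "B \<in> blocks ` {..<N} - {{}}"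
  then show "H_design n g (Suc t) t {..<n * g} (div_groups n g) B"
    using H_design_blocks by auto
qed

end

lemma ex_large_set_H_of_steiner_decomposition:
  assumes g: "0 < g" and D: "steiner_decomposition g t (Suc t) {..<n} N F"
  shows "\<exists>(Q :: nat set) G \<B>. large_set_H n g (Suc t) t Q G \<B>"
proof -
  have count: "card {i. i < N \<and> Q \<in> F i} = g" if "Q \<subseteq> {..<n}" "card Q = Suc t" for Q
    using D that unfolding steiner_decomposition_def by blast
  have "\<forall>Q \<in> {Q. Q \<subseteq> {..<n} \<and> card Q = Suc t}. \<exists>h. bij_betw h {i. i < N \<and> Q \<in> F i} {..<g}"
  proof
    fix Q assume "Q \<in> {Q. Q \<subseteq> {..<n} \<and> card Q = Suc t}"
    then have "card {i. i < N \<and> Q \<in> F i} = g"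
      using count by simp
    then show "\<exists>h. bij_betw h {i. i < N \<and> Q \<in> F i} {..<g}"
      using ex_bij_betw_finite_nat[of "{i. i < N \<and> Q \<in> F i}"] by (simp add: lessThan_atLeast0)
  qed
  from bchoice[OF this] obtain label where
    "\<forall>Q \<in> {Q. Q \<subseteq> {..<n} \<and> card Q = Suc t}. bij_betw (label Q) {i. i < N \<and> Q \<in> F i} {..<g}"
    by blast
  then interpret steiner_decomposition_lifting n g t N F label
    by unfold_locales (use g D in auto)
  show ?thesis
    using large_set_H_blocks by blast
qed

section \<open>The Steiner quadruple system of order 10\<close>

fun combinations :: "nat \<Rightarrow> 'a list \<Rightarrow> 'a list list" where
  "combinations 0 _ = [[]]"
| "combinations (Suc k) [] = []"
| "combinations (Suc k) (x # xs) = map ((#) x) (combinations k xs) @ combinations (Suc k) xs"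

lemma card_subset_in_combinations:
  assumes "T \<subseteq> set xs" and "card T = k"
  shows "T \<in> set ` set (combinations k xs)"
  using assms
proof (induction k xs arbitrary: T rule: combinations.induct)
  case (1 xs)
  then show ?case
    using finite_subset by fastforce
next
  case (2 k)
  then show ?case
    by simp
next
  case (3 k x xs)
  show ?case
  proof (cases "x \<in> T")
    case True
    have "T - {x} \<subseteq> set xs" "card (T - {x}) = k"
      using "3.prems" True by auto
    then obtain ys where "ys \<in> set (combinations k xs)" "set ys = T - {x}"
      using "3.IH"(1) by blast
    then have "x # ys \<in> set (combinations (Suc k) (x # xs))" "T = set (x # ys)"
      using True by auto
    then show ?thesis
      by blast
  next
    case False
    then show ?thesis
      using "3.IH"(2)[of T] "3.prems" by auto
  qed
qed

lemma card_subsets_from_combinations: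
  assumes "list_all (\<lambda>ys. P (set ys)) (combinations k xs)" "T \<subseteq> set xs" "card T = k"
  shows "P T"
  using card_subset_in_combinations[OF assms(2,3)] assms(1) by (auto simp: list_all_iff)

definition sqs10_blocks :: "nat list list" where
  "sqs10_blocks = [[0,1,2,3],[0,1,4,9],[0,1,5,6],[0,1,7,8],[0,2,4,6],[0,2,5,7],[0,2,8,9],[0,3,4,7],
    [0,3,5,9],[0,3,6,8],[0,4,5,8],[0,6,7,9],[1,2,4,8],[1,2,5,9],[1,2,6,7],[1,3,4,6],[1,3,5,8],
    [1,3,7,9],[1,4,5,7],[1,6,8,9],[2,3,4,5],[2,3,6,9],[2,3,7,8],[2,4,7,9],[2,5,6,8],[3,4,8,9],
    [3,5,6,7],[4,5,6,9],[4,6,7,8],[5,7,8,9]]"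

definition sqs10 :: "nat set set" where
  "sqs10 = set (map set sqs10_blocks)"

lemma steiner_system_sqs10: "steiner_system 3 4 {..<10} sqs10"
proof -
  have blocks: "list_all (\<lambda>B. set B \<subseteq> {..<10} \<and> card (set B) = 4) sqs10_blocks"
    unfolding sqs10_blocks_def by code_simp
  have "list_all (\<lambda>ys. length (filter (\<lambda>B. set ys \<subseteq> set B) sqs10_blocks) = 1)
          (combinations 3 [0..<10])"
    unfolding sqs10_blocks_def by code_simp
  then have count: "length (filter (\<lambda>B. T \<subseteq> set B) sqs10_blocks) = 1"
    if "T \<subseteq> {..<10}" "card T = 3" for T
    using card_subsets_from_combinations
        [where P = "\<lambda>T. length (filter (\<lambda>B. T \<subseteq> set B) sqs10_blocks) = 1"] that
    by (simp add: lessThan_atLeast0)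
  have "card {Q \<in> sqs10. T \<subseteq> Q} = 1" if T: "T \<subseteq> {..<10}" "card T = 3" for T
  proof -
    obtain B where "filter (\<lambda>B. T \<subseteq> set B) sqs10_blocks = [B]"
      using count[OF T] by (auto simp: length_Suc_conv)
    moreover have "{Q \<in> sqs10. T \<subseteq> Q} = set (map set (filter (\<lambda>B. T \<subseteq> set B) sqs10_blocks))"
      unfolding sqs10_def by auto
    ultimately show ?thesis
      by simp
  qed
  moreover have "sqs10 \<subseteq> {Q. Q \<subseteq> {..<10} \<and> card Q = 4}"
    using blocks unfolding sqs10_def list_all_iff by auto
  ultimately show ?thesis
    unfolding steiner_system_def by blast
qed

(* Indexing the blocks by their two smallest points keeps membership tests cheap to evaluate. *)
definition pair_index :: "nat \<Rightarrow> nat list list \<Rightarrow> nat list list list list" where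
  "pair_index n Bs = map (\<lambda>a. map (\<lambda>b. filter (\<lambda>B. take 2 B = [a, b]) Bs) [0..<n]) [0..<n]"

fun in_pair_index :: "nat list list list list \<Rightarrow> nat list \<Rightarrow> bool" where
  "in_pair_index I (a # b # L) \<longleftrightarrow> a # b # L \<in> set (I ! a ! b)"
| "in_pair_index I _ \<longleftrightarrow> False"

lemma in_pair_index_iff:
  assumes "set L \<subseteq> {..<n}"
  shows "in_pair_index (pair_index n Bs) L \<longleftrightarrow> L \<in> set Bs \<and> 2 \<le> length L"
proof (cases "(pair_index n Bs, L)" rule: in_pair_index.cases)
  case (1 I a b L')
  then have "pair_index n Bs ! a ! b = filter (\<lambda>B. take 2 B = [a, b]) Bs"
    using assms by (auto simp: pair_index_def)
  then show ?thesis
    using 1 by simp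
qed auto

lemma mem_sqs10_iff:
  assumes "Q \<subseteq> {..<10}"
  shows "Q \<in> sqs10 \<longleftrightarrow> in_pair_index (pair_index 10 sqs10_blocks) (sorted_list_of_set Q)"
proof -
  have blocks: "list_all (\<lambda>B. sorted_wrt (<) B \<and> length B = 4) sqs10_blocks"
    unfolding sqs10_blocks_def by code_simp
  have "finite Q"
    using assms finite_subset by blast
  have "Q \<in> sqs10 \<longleftrightarrow> sorted_list_of_set Q \<in> set sqs10_blocks"
  proof
    assume "Q \<in> sqs10"
    then obtain B where "B \<in> set sqs10_blocks" "Q = set B"
      unfolding sqs10_def by auto
    moreover have "sorted_list_of_set (set B) = B"
      using calculation(1) blocks
      by (simp add: list_all_iff sorted_list_of_set_sort_remdups strict_sorted_iff
          distinct_remdups_id sorted_sort_id)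
    ultimately show "sorted_list_of_set Q \<in> set sqs10_blocks"
      by simp
  next
    assume "sorted_list_of_set Q \<in> set sqs10_blocks"
    then show "Q \<in> sqs10"
      using \<open>finite Q\<close> unfolding sqs10_def by (metis image_eqI list.set_map set_sorted_list_of_set)
  qed
  also have "\<dots> \<longleftrightarrow> in_pair_index (pair_index 10 sqs10_blocks) (sorted_list_of_set Q)"
    using in_pair_index_iff[of "sorted_list_of_set Q" 10 sqs10_blocks] assms \<open>finite Q\<close> blocks
    by (auto simp: list_all_iff)
  finally show ?thesis .
qed

definition sqs10_relabellings_cover :: "nat \<Rightarrow> nat list list \<Rightarrow> bool" where
  "sqs10_relabellings_cover lam qs \<longleftrightarrow>
     list_all (\<lambda>q. sort q = [0..<10]) qs \<and>
     list_all (\<lambda>ys. length (filter (\<lambda>q.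
         in_pair_index (pair_index 10 sqs10_blocks) (sorted_list_of_set ((!) q ` set ys))) qs) = lam)
       (combinations 4 [0..<10])"

lemma steiner_decomposition_sqs10_pullbacks:
  assumes "sqs10_relabellings_cover lam qs"
  shows "steiner_decomposition lam 3 4 {..<10} (length qs)
      (\<lambda>i. {Q. Q \<subseteq> {..<10} \<and> (!) (qs ! i) ` Q \<in> sqs10})"
proof (rule steiner_decomposition_pullbacks[OF steiner_system_sqs10])
  have perm: "length q = 10 \<and> set q = {..<10}" if "q \<in> set qs" for q
  proof -
    have "sort q = [0..<10]"
      using assms that by (simp add: sqs10_relabellings_cover_def list_all_iff)
    then show ?thesis
      by (metis length_sort length_upt set_sort atLeast_upt diff_zero)
  qed
  then show "\<And>q. q \<in> set qs \<Longrightarrow> length q = 10 \<and> set q = {..<10}" .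
  fix Q :: "nat set" assume Q: "Q \<subseteq> {..<10}" "card Q = 4"
  have "(!) q ` Q \<subseteq> {..<10}" if "q \<in> set qs" for q
    using Q(1) perm[OF that] nth_mem by fastforce
  then have "filter (\<lambda>q. (!) q ` Q \<in> sqs10) qs =
      filter (\<lambda>q. in_pair_index (pair_index 10 sqs10_blocks) (sorted_list_of_set ((!) q ` Q))) qs"
    by (auto intro: filter_cong simp: mem_sqs10_iff)
  also have "length \<dots> = lam"
  proof -
    have "list_all (\<lambda>ys. length (filter (\<lambda>q.
        in_pair_index (pair_index 10 sqs10_blocks) (sorted_list_of_set ((!) q ` set ys))) qs) = lam)
      (combinations 4 [0..<10])"
      using assms by (simp add: sqs10_relabellings_cover_def)
    from card_subsets_from_combinations[OF this] show ?thesis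
      using Q by (simp add: lessThan_atLeast0)
  qed
  finally show "length (filter (\<lambda>q. (!) q ` Q \<in> sqs10) qs) = lam" .
qed

(* Found by computer search. As the SQS(10) is unique up to isomorphism, the systems of any such
   decomposition are relabelled copies of sqs10. *)
definition sqs10_relabellings_2 :: "nat list list" where
  "sqs10_relabellings_2 =
    [[0,1,2,3,4,5,6,7,8,9], [0,1,2,3,5,9,4,7,8,6], [0,1,2,9,3,4,7,8,5,6], [0,1,2,4,3,6,9,8,5,7],
     [0,1,2,9,4,3,5,7,6,8], [0,1,2,4,5,3,8,7,6,9], [0,1,2,8,4,7,3,9,6,5], [0,1,2,4,5,8,3,9,6,7],
     [0,1,2,5,8,7,4,3,6,9], [0,1,2,5,9,4,8,3,6,7], [0,1,2,5,7,4,6,8,3,9], [0,1,2,4,6,7,5,8,3,9],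
     [0,1,2,7,8,9,5,4,6,3], [0,1,2,9,7,5,8,4,6,3]]"

definition sqs10_relabellings_3 :: "nat list list" where
  "sqs10_relabellings_3 =
    [[0,1,2,3,5,4,6,9,8,7], [0,1,2,3,7,4,9,5,6,8], [0,1,2,3,7,5,4,9,6,8], [0,1,2,8,3,9,7,4,6,5],
     [0,1,2,5,3,8,4,7,9,6], [0,1,2,4,3,6,7,8,5,9], [0,1,2,4,9,3,8,6,7,5], [0,1,2,5,4,3,7,6,9,8],
     [0,1,2,7,4,3,6,9,8,5], [0,1,2,5,4,9,3,6,7,8], [0,1,2,4,8,7,3,5,9,6], [0,1,2,8,4,9,3,5,6,7],
     [0,1,2,4,6,9,7,3,5,8], [0,1,2,4,8,5,9,3,6,7], [0,1,2,4,6,7,5,3,9,8], [0,1,2,8,7,4,9,6,3,5],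
     [0,1,2,4,9,7,5,6,3,8], [0,1,2,7,4,6,8,9,3,5], [0,1,2,9,8,4,7,5,6,3], [0,1,2,7,4,8,5,9,6,3],
     [0,1,2,4,5,7,8,9,6,3]]"

lemma ex_sqs10_decomposition_2: "\<exists>N F. steiner_decomposition 2 3 4 {..<10::nat} N F"
proof -
  have "sqs10_relabellings_cover 2 sqs10_relabellings_2"
    unfolding sqs10_relabellings_2_def by code_simp
  then show ?thesis
    by (blast dest: steiner_decomposition_sqs10_pullbacks)
qed

lemma ex_sqs10_decomposition_3: "\<exists>N F. steiner_decomposition 3 3 4 {..<10::nat} N F"
proof -
  have "sqs10_relabellings_cover 3 sqs10_relabellings_3"
    unfolding sqs10_relabellings_3_def by code_simp
  then show ?thesis
    by (blast dest: steiner_decomposition_sqs10_pullbacks)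
qed

theorem theorem17:
  fixes g :: nat
  assumes "g \<ge> 2"
  shows "\<exists>(Q :: nat set) G \<B>. large_set_H 10 g 4 3 Q G \<B>"
proof -
  obtain N2 F2 where "steiner_decomposition 2 3 4 {..<10::nat} N2 F2"
    using ex_sqs10_decomposition_2 by blast
  moreover obtain N3 F3 where "steiner_decomposition 3 3 4 {..<10::nat} N3 F3"
    using ex_sqs10_decomposition_3 by blast
  ultimately obtain N F where "steiner_decomposition g 3 4 {..<10::nat} N F"
    using steiner_decomposition_from_2_and_3 assms by blast
  then show ?thesis
    using ex_large_set_H_of_steiner_decomposition[of g 3 10 N F] assms by simp
qed

end
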